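(* Let $G$ be a finite, connected, pointed, edge-ordered graph with distinguished vertex $v_0$. For any vertices $u,v,w$ with $u\prec_D v\prec_D w$, if $u\to w$, then there exists a vertex $v'$ with $u\preceq_D v'\prec_D v$ and $v'\to v$.
   Context: A (directed) graph is $(V,\to)$ with $\to\subseteq V\times V$; $N(u)$ is the set of outgoing edges of $u$. A pointed graph has a distinguished vertex $v_0$; connected means every vertex is reachable by a path from $v_0$. A path is a finite sequence $v_1\to\cdots\to v_n$ of vertices joined by edges; proper if no vertex repeats; co-initial paths share their source; $\pi\sqsubset\sigma$ means $\pi$ is a proper prefix of $\sigma$. A finite edge-ordered graph is a finite graph with a strict linear order $\triangleleft$ on each neighborhood. Lexicographic path order on co-initial paths: if $\pi\sqsubset\sigma$ then $\pi\prec\sigma$ (symmetrically); otherwise, with $\zeta$ the longest common prefix, $u$ its target and $v_1,v_2$ the next vertices, $\pi\prec\sigma$ iff $u\to v_1\triangleleft u\to v_2$. $\min(u\rightsquigarrow v)$ is the $\prec$-least proper path from $u$ to $v$. Define $v\prec_D w$ iff $\min(v_0\rightsquigarrow v)\prec\min(v_0\rightsquigarrow w)$, and $v\preceq_D w$ iff $v\prec_D w$ or $v=w$. *)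

theory Defs
  imports Main
begin

text \<open>An edge order is given by ord :: 'v => 'v => 'v => bool, where
  ord u a b means that edge u->a is strictly below edge u->b in the order on N(u).\<close>

definition nbhd :: "('v \<times> 'v) set \<Rightarrow> 'v \<Rightarrow> 'v set" where
  "nbhd E u = {v. (u, v) \<in> E}"

definition finite_graph :: "'v set \<Rightarrow> ('v \<times> 'v) set \<Rightarrow> bool" where
  "finite_graph V E \<longleftrightarrow> finite V \<and> E \<subseteq> V \<times> V"

definition edge_order :: "('v \<times> 'v) set \<Rightarrow> ('v \<Rightarrow> 'v \<Rightarrow> 'v \<Rightarrow> bool) \<Rightarrow> bool" where
  "edge_order E ord \<longleftrightarrow> (\<forall>u.
      (\<forall>a b. ord u a b \<longrightarrow> a \<in> nbhd E u \<and> b \<in> nbhd E u)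
    \<and> (\<forall>a. \<not> ord u a a)
    \<and> (\<forall>a b c. ord u a b \<longrightarrow> ord u b c \<longrightarrow> ord u a c)
    \<and> (\<forall>a\<in>nbhd E u. \<forall>b\<in>nbhd E u. a \<noteq> b \<longrightarrow> ord u a b \<or> ord u b a))"

definition is_path :: "('v \<times> 'v) set \<Rightarrow> 'v list \<Rightarrow> bool" where
  "is_path E xs \<longleftrightarrow> xs \<noteq> [] \<and> (\<forall>i. Suc i < length xs \<longrightarrow> (xs ! i, xs ! Suc i) \<in> E)"

definition proper_path_from_to :: "('v \<times> 'v) set \<Rightarrow> 'v \<Rightarrow> 'v \<Rightarrow> 'v list \<Rightarrow> bool" where
  "proper_path_from_to E u v xs \<longleftrightarrow> is_path E xs \<and> distinct xs \<and> hd xs = u \<and> last xs = v"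

definition connected_pointed :: "'v set \<Rightarrow> ('v \<times> 'v) set \<Rightarrow> 'v \<Rightarrow> bool" where
  "connected_pointed V E v0 \<longleftrightarrow> v0 \<in> V \<and>
     (\<forall>v\<in>V. \<exists>xs. is_path E xs \<and> hd xs = v0 \<and> last xs = v)"

definition path_less :: "('v \<Rightarrow> 'v \<Rightarrow> 'v \<Rightarrow> bool) \<Rightarrow> 'v list \<Rightarrow> 'v list \<Rightarrow> bool" where
  "path_less ord p s \<longleftrightarrow>
     (\<exists>r. r \<noteq> [] \<and> s = p @ r) \<or>
     (\<exists>z v1 v2 r1 r2. z \<noteq> [] \<and> p = z @ v1 # r1 \<and> s = z @ v2 # r2 \<and> v1 \<noteq> v2
        \<and> ord (last z) v1 v2)"

definition min_path :: "('v \<times> 'v) set \<Rightarrow> ('v \<Rightarrow> 'v \<Rightarrow> 'v \<Rightarrow> bool) \<Rightarrow> 'v \<Rightarrow> 'v \<Rightarrow> 'v list" where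
  "min_path E ord u v = (THE p. proper_path_from_to E u v p \<and>
      (\<forall>s. proper_path_from_to E u v s \<and> s \<noteq> p \<longrightarrow> path_less ord p s))"

definition prec_D :: "('v \<times> 'v) set \<Rightarrow> ('v \<Rightarrow> 'v \<Rightarrow> 'v \<Rightarrow> bool) \<Rightarrow> 'v \<Rightarrow> 'v \<Rightarrow> 'v \<Rightarrow> bool" where
  "prec_D E ord v0 v w \<longleftrightarrow> path_less ord (min_path E ord v0 v) (min_path E ord v0 w)"

definition preceq_D :: "('v \<times> 'v) set \<Rightarrow> ('v \<Rightarrow> 'v \<Rightarrow> 'v \<Rightarrow> bool) \<Rightarrow> 'v \<Rightarrow> 'v \<Rightarrow> 'v \<Rightarrow> bool" where
  "preceq_D E ord v0 v w \<longleftrightarrow> prec_D E ord v0 v w \<or> v = w"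

end

theory Submission
  imports Defs "HOL-Library.Sublist"
begin

text \<open>Write \<pi> x for the least proper path from v0 to x. Following \<pi> u by the edge u \<rightarrow> w
  (cut back at w if \<pi> u already visits w) gives a proper path to w, so \<pi> w \<preceq> \<pi> u @ [w].
  Hence \<pi> u \<prec> \<pi> v \<prec> \<pi> u @ [w], which forces \<pi> u to be a proper prefix of \<pi> v.
  Take v' to be the vertex preceding v on \<pi> v; the initial segment of \<pi> v ending at v' shows
  \<pi> v' \<prec> \<pi> v. If v' \<noteq> u then v' lies on \<pi> v beyond \<pi> u, and \<pi> v' \<prec> \<pi> u would mean that
  \<pi> v' branches off below \<pi> u; then \<pi> v' followed by v' \<rightarrow> v would be a path to v below \<pi> v.\<close>

definition branch_less :: "('v \<Rightarrow> 'v \<Rightarrow> 'v \<Rightarrow> bool) \<Rightarrow> 'v list \<Rightarrow> 'v list \<Rightarrow> bool" where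
  "branch_less ord p s \<longleftrightarrow> (\<exists>z v1 v2 r1 r2. z \<noteq> [] \<and> p = z @ v1 # r1 \<and> s = z @ v2 # r2
      \<and> v1 \<noteq> v2 \<and> ord (last z) v1 v2)"

abbreviation path_le :: "('v \<Rightarrow> 'v \<Rightarrow> 'v \<Rightarrow> bool) \<Rightarrow> 'v list \<Rightarrow> 'v list \<Rightarrow> bool" where
  "path_le ord p s \<equiv> p = s \<or> path_less ord p s"

lemma path_less_iff_strict_prefix_or_branch_less:
  "path_less ord p s \<longleftrightarrow> strict_prefix p s \<or> branch_less ord p s"
  unfolding path_less_def branch_less_def strict_prefix_def prefix_def by auto

lemma edge_order_irrefl: "edge_order E ord \<Longrightarrow> \<not> ord u a a"
  unfolding edge_order_def by blast

lemma edge_order_trans: "edge_order E ord \<Longrightarrow> ord u a b \<Longrightarrow> ord u b c \<Longrightarrow> ord u a c"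
  unfolding edge_order_def by blast

lemma edge_order_total:
  "edge_order E ord \<Longrightarrow> (u, a) \<in> E \<Longrightarrow> (u, b) \<in> E \<Longrightarrow> a \<noteq> b \<Longrightarrow> ord u a b \<or> ord u b a"
  unfolding edge_order_def nbhd_def by blast

lemma branch_less_irrefl: "\<not> branch_less ord p p"
  unfolding branch_less_def by auto

lemma branch_less_append: "branch_less ord p s \<Longrightarrow> branch_less ord (p @ xs) (s @ ys)"
  unfolding branch_less_def by fastforce

lemma prefix_branch_less_imp_path_less:
  assumes "prefix p s" and "branch_less ord s t"
  shows "path_less ord p t"
proof -
  obtain z a b r1 r2 where z: "z \<noteq> []" "s = z @ a # r1" "t = z @ b # r2" "a \<noteq> b"
    "ord (last z) a b" using assms(2) unfolding branch_less_def by blast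
  from assms(1) z(2) consider "prefix p z" | m where "p = z @ a # m"
    by (auto simp: prefix_append prefix_Cons)
  then show ?thesis
  proof cases
    case 1
    then have "strict_prefix p t"
      using z(3) by (auto simp: strict_prefix_def prefix_def)
    then show ?thesis by (simp add: path_less_iff_strict_prefix_or_branch_less)
  next
    case 2
    then show ?thesis using z unfolding path_less_def by blast
  qed
qed

lemma branch_less_trans:
  assumes "edge_order E ord" and "branch_less ord p s" and "branch_less ord s t"
  shows "branch_less ord p t"
proof -
  obtain z1 a b r1 r2 where ps: "z1 \<noteq> []" "p = z1 @ a # r1" "s = z1 @ b # r2" "a \<noteq> b"
    "ord (last z1) a b" using assms(2) unfolding branch_less_def by blast
  obtain z2 c d r3 r4 where st: "z2 \<noteq> []" "s = z2 @ c # r3" "t = z2 @ d # r4" "c \<noteq> d"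
    "ord (last z2) c d" using assms(3) unfolding branch_less_def by blast
  have "z1 @ b # r2 = z2 @ c # r3" using ps st by simp
  then have "(z1 = z2 \<and> b = c) \<or> (\<exists>m. z2 = z1 @ b # m) \<or> (\<exists>m. z1 = z2 @ c # m)"
    by (auto simp: append_eq_append_conv2 Cons_eq_append_conv append_eq_Cons_conv)
  then consider "z1 = z2" "b = c" | m where "z2 = z1 @ b # m" | m where "z1 = z2 @ c # m"
    by blast
  then show ?thesis
  proof cases
    case 1
    then have "ord (last z1) a d"
      using edge_order_trans[OF assms(1) ps(5)] st(5) by simp
    moreover then have "a \<noteq> d" using edge_order_irrefl[OF assms(1)] by metis
    ultimately show ?thesis unfolding branch_less_def using 1 ps st by blast
  next
    case (2 m)
    then have "t = z1 @ b # (m @ d # r4)" using st(3) by simp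
    then show ?thesis unfolding branch_less_def using ps by blast
  next
    case (3 m)
    then have "p = z2 @ c # (m @ a # r1)" using ps(2) by simp
    then show ?thesis unfolding branch_less_def using st by blast
  qed
qed

lemma path_less_irrefl: "\<not> path_less ord p p"
  by (simp add: path_less_iff_strict_prefix_or_branch_less branch_less_irrefl)

lemma path_less_trans:
  assumes "edge_order E ord" and "path_less ord p s" and "path_less ord s t"
  shows "path_less ord p t"
proof -
  consider "strict_prefix p s" "strict_prefix s t" | "strict_prefix p s" "branch_less ord s t"
    | "branch_less ord p s" "prefix s t" | "branch_less ord p s" "branch_less ord s t"
    using assms(2,3) unfolding path_less_iff_strict_prefix_or_branch_less by auto
  then show ?thesis
  proof cases
    case 1
    then show ?thesis
      using path_less_iff_strict_prefix_or_branch_less prefix_order.less_trans by blast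
  next
    case 2
    then show ?thesis using prefix_branch_less_imp_path_less prefix_order.less_imp_le by blast
  next
    case 3
    then show ?thesis using branch_less_append[of ord p s "[]"]
      by (auto simp: prefix_def path_less_iff_strict_prefix_or_branch_less)
  next
    case 4
    then show ?thesis
      using branch_less_trans[OF assms(1)] path_less_iff_strict_prefix_or_branch_less by blast
  qed
qed

lemma path_less_asym: "edge_order E ord \<Longrightarrow> path_less ord p s \<Longrightarrow> \<not> path_less ord s p"
  using path_less_trans path_less_irrefl by metis

lemma path_le_less_trans:
  "edge_order E ord \<Longrightarrow> path_le ord p s \<Longrightarrow> path_less ord s t \<Longrightarrow> path_less ord p t"
  using path_less_trans by blast

lemma path_less_le_trans:
  "edge_order E ord \<Longrightarrow> path_less ord p s \<Longrightarrow> path_le ord s t \<Longrightarrow> path_less ord p t"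
  using path_less_trans by blast

lemma prefix_imp_path_le: "prefix p s \<Longrightarrow> path_le ord p s"
  by (auto simp: path_less_iff_strict_prefix_or_branch_less strict_prefix_def)

lemma path_less_append_imp_strict_prefix:
  assumes "edge_order E ord" and "path_less ord p s" and "path_less ord s (p @ xs)"
  shows "strict_prefix p s"
proof (rule ccontr)
  assume "\<not> strict_prefix p s"
  then have "branch_less ord (p @ xs) s"
    using assms(2) branch_less_append[of ord p s xs "[]"]
    by (simp add: path_less_iff_strict_prefix_or_branch_less)
  then show False
    using assms(1,3) path_less_asym path_less_iff_strict_prefix_or_branch_less by blast
qed

lemma is_path_singleton [simp]: "is_path E [x]"
  unfolding is_path_def by simp

lemma is_path_Cons_Cons [simp]: "is_path E (x # y # xs) \<longleftrightarrow> (x, y) \<in> E \<and> is_path E (y # xs)"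
  unfolding is_path_def by (auto simp: nth_Cons split: nat.splits)

lemma is_path_append:
  "xs \<noteq> [] \<Longrightarrow> ys \<noteq> [] \<Longrightarrow>
   is_path E (xs @ ys) \<longleftrightarrow> is_path E xs \<and> is_path E ys \<and> (last xs, hd ys) \<in> E"
proof (induction xs)
  case (Cons x xs)
  then show ?case by (cases xs; cases ys) auto
qed simp

lemma is_path_subset:
  assumes "is_path E p" and "hd p \<in> V" and "E \<subseteq> V \<times> V"
  shows "set p \<subseteq> V"
  using assms
proof (induction p)
  case (Cons x xs)
  then show ?case by (cases xs) auto
qed simp

lemma path_less_total:
  assumes "edge_order E ord" and "is_path E p" and "is_path E s" and "hd p = hd s" and "p \<noteq> s"
  shows "path_less ord p s \<or> path_less ord s p"
proof (cases "p \<parallel> s")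
  case True
  then obtain z a r1 b r2 where z: "a \<noteq> b" "p = z @ a # r1" "s = z @ b # r2"
    using parallel_decomp by blast
  have "z \<noteq> []" using z assms(4) by auto
  then have "(last z, a) \<in> E" "(last z, b) \<in> E"
    using z assms(2,3) is_path_append[of z] by auto
  then have "ord (last z) a b \<or> ord (last z) b a"
    using edge_order_total[OF assms(1)] z(1) by blast
  then have "branch_less ord p s \<or> branch_less ord s p"
    unfolding branch_less_def using z \<open>z \<noteq> []\<close> by blast
  then show ?thesis by (auto simp: path_less_iff_strict_prefix_or_branch_less)
next
  case False
  then have "prefix p s \<or> prefix s p" by (simp add: parallel_def)
  then show ?thesis using assms(5) prefix_imp_path_le by blast
qed

lemma is_path_prefix: "is_path E (p @ r) \<Longrightarrow> p \<noteq> [] \<Longrightarrow> is_path E p"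
  by (cases "r = []") (simp_all add: is_path_append)

lemma proper_path_prefix:
  assumes "proper_path_from_to E a b p" and "prefix q p" and "q \<noteq> []"
  shows "proper_path_from_to E a (last q) q"
proof -
  obtain r where p: "p = q @ r" using assms(2) by (auto simp: prefix_def)
  show ?thesis
    using assms(1,3) is_path_prefix[of E q r] unfolding p proper_path_from_to_def
    by simp
qed

text \<open>The witness is p @ [x] itself, or the prefix of p ending at x if p already visits x.\<close>
lemma proper_path_snoc_prefix:
  assumes "proper_path_from_to E a b p" and "(b, x) \<in> E"
  obtains q where "proper_path_from_to E a x q" and "prefix q (p @ [x])"
proof (cases "x \<in> set p")
  case True
  then obtain C D where "p = C @ x # D" by (meson split_list)
  then show ?thesis
    using that proper_path_prefix[OF assms(1), of "C @ [x]"] by (simp add: prefix_def)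
next
  case False
  have "p \<noteq> []" using assms(1) unfolding proper_path_from_to_def is_path_def by simp
  then have "proper_path_from_to E a x (p @ [x])"
    using assms False unfolding proper_path_from_to_def by (simp add: is_path_append)
  then show ?thesis using that by blast
qed

lemma is_path_imp_proper_path:
  assumes "is_path E p"
  obtains q where "proper_path_from_to E (hd p) (last p) q"
  using assms
proof (induction p arbitrary: thesis rule: rev_induct)
  case Nil
  then show ?case by (simp add: is_path_def)
next
  case (snoc x p)
  show ?case
  proof (cases "p = []")
    case True
    then show ?thesis using snoc.prems(1)[of "[x]"] by (simp add: proper_path_from_to_def)
  next
    case False
    then have "is_path E p" and edge: "(last p, x) \<in> E"
      using snoc.prems(2) is_path_append[of p "[x]"] by simp_all
    then obtain q where "proper_path_from_to E (hd p) (last p) q" using snoc.IH by blast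
    then obtain q' where "proper_path_from_to E (hd p) x q'"
      using proper_path_snoc_prefix[OF _ edge] by blast
    then show ?thesis using snoc.prems(1) False by simp
  qed
qed

lemma finite_proper_paths:
  assumes "finite_graph V E" and "a \<in> V"
  shows "finite {p. proper_path_from_to E a b p}"
proof -
  have "finite V" and "E \<subseteq> V \<times> V" using assms(1) unfolding finite_graph_def by auto
  have "{p. proper_path_from_to E a b p} \<subseteq> {p. set p \<subseteq> V \<and> length p \<le> card V}"
  proof
    fix p assume "p \<in> {p. proper_path_from_to E a b p}"
    then have "is_path E p" "distinct p" "hd p = a" unfolding proper_path_from_to_def by auto
    then have "set p \<subseteq> V" using is_path_subset \<open>E \<subseteq> V \<times> V\<close> assms(2) by blast
    moreover have "length p \<le> card V"
      using distinct_card[OF \<open>distinct p\<close>] card_mono[OF \<open>finite V\<close> \<open>set p \<subseteq> V\<close>] by simp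
    ultimately show "p \<in> {p. set p \<subseteq> V \<and> length p \<le> card V}" by simp
  qed
  then show ?thesis by (rule finite_subset[OF _ finite_lists_length_le[OF \<open>finite V\<close>]])
qed

locale pointed_edge_ordered_graph =
  fixes V :: "'v set" and E :: "('v \<times> 'v) set" and ord :: "'v \<Rightarrow> 'v \<Rightarrow> 'v \<Rightarrow> bool"
    and v0 :: 'v
  assumes finite_graph: "finite_graph V E"
    and edge_order: "edge_order E ord"
    and connected: "connected_pointed V E v0"
begin

abbreviation minp :: "'v \<Rightarrow> 'v list" where
  "minp \<equiv> min_path E ord v0"

lemma edges_subset: "E \<subseteq> V \<times> V"
  using finite_graph unfolding finite_graph_def by simp

lemma root_in_vertices: "v0 \<in> V"
  using connected unfolding connected_pointed_def by simp

lemma min_path_is_least: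
  assumes "x \<in> V"
  shows "proper_path_from_to E v0 x (minp x)
    \<and> (\<forall>s. proper_path_from_to E v0 x s \<longrightarrow> path_le ord (minp x) s)"
proof -
  let ?S = "{p. proper_path_from_to E v0 x p}"
  have fin: "finite ?S" using finite_proper_paths[OF finite_graph root_in_vertices] .
  obtain p where "is_path E p" "hd p = v0" "last p = x"
    using connected assms unfolding connected_pointed_def by blast
  then obtain q where "q \<in> ?S" using is_path_imp_proper_path by (metis mem_Collect_eq)
  then have nonempty: "?S \<noteq> {}" by blast
  have asym: "asymp_on ?S (path_less ord)"
    unfolding asymp_on_def using path_less_asym[OF edge_order] by blast
  have trans: "transp_on ?S (path_less ord)"
    unfolding transp_on_def using path_less_trans[OF edge_order] by blast
  obtain m where m: "m \<in> ?S" "\<forall>s\<in>?S. s \<noteq> m \<longrightarrow> \<not> path_less ord s m"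
    using Finite_Set.bex_min_element[OF fin asym trans nonempty] by blast
  have m_proper: "proper_path_from_to E v0 x m" using m(1) by simp
  have least: "path_le ord m s" if "proper_path_from_to E v0 x s" for s
  proof (cases "s = m")
    case False
    then have "\<not> path_less ord s m" using m(2) that by simp
    then show ?thesis
      using False that m_proper path_less_total[OF edge_order, of m s]
      unfolding proper_path_from_to_def by blast
  qed simp
  have "minp x = m"
    unfolding min_path_def
  proof (rule the_equality)
    show "proper_path_from_to E v0 x m
      \<and> (\<forall>s. proper_path_from_to E v0 x s \<and> s \<noteq> m \<longrightarrow> path_less ord m s)"
      using m_proper least by blast
  next
    fix p
    assume p: "proper_path_from_to E v0 x p
      \<and> (\<forall>s. proper_path_from_to E v0 x s \<and> s \<noteq> p \<longrightarrow> path_less ord p s)"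
    show "p = m"
    proof (rule ccontr)
      assume "p \<noteq> m"
      then have "path_less ord p m" and "path_less ord m p"
        using p m_proper least[of p] by auto
      then show False using path_less_asym[OF edge_order] by blast
    qed
  qed
  then show ?thesis using m_proper least by simp
qed

lemma min_path_proper: "x \<in> V \<Longrightarrow> proper_path_from_to E v0 x (minp x)"
  using min_path_is_least by blast

lemma min_path_le: "x \<in> V \<Longrightarrow> proper_path_from_to E v0 x s \<Longrightarrow> path_le ord (minp x) s"
  using min_path_is_least by blast

lemma min_path_le_snoc:
  assumes "proper_path_from_to E v0 b p" and "(b, x) \<in> E"
  shows "path_le ord (minp x) (p @ [x])"
proof -
  obtain q where q: "proper_path_from_to E v0 x q" "prefix q (p @ [x])"
    using proper_path_snoc_prefix[OF assms] .
  have "x \<in> V" using assms(2) edges_subset by blast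
  then have "path_le ord (minp x) q" using min_path_le q(1) by blast
  moreover have "path_le ord q (p @ [x])" using prefix_imp_path_le q(2) .
  ultimately show ?thesis using path_less_trans[OF edge_order] by blast
qed

lemma min_path_last_edge:
  assumes "v \<in> V" and "minp v = q @ [v]" and "q \<noteq> []"
  shows "(last q, v) \<in> E" and "last q \<in> V" and "path_less ord (minp (last q)) (minp v)"
proof -
  have pv: "proper_path_from_to E v0 v (q @ [v])"
    using min_path_proper[OF assms(1)] assms(2) by simp
  then show edge: "(last q, v) \<in> E"
    using assms(3) is_path_append[of q "[v]"] unfolding proper_path_from_to_def by simp
  then show "last q \<in> V" using edges_subset by blast
  have "proper_path_from_to E v0 (last q) q"
    using proper_path_prefix[OF pv _ assms(3)] by simp
  then have "path_le ord (minp (last q)) q" using min_path_le \<open>last q \<in> V\<close> by blast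
  moreover have "path_less ord q (minp v)"
    using assms(2) unfolding path_less_def by blast
  ultimately show "path_less ord (minp (last q)) (minp v)"
    using path_le_less_trans[OF edge_order] by blast
qed

text \<open>Otherwise the minimal path to y would branch off below that to u, and so would its
  extension by the edge y \<rightarrow> v, undercutting the minimal path to v.\<close>
lemma min_path_less_if_avoiding:
  assumes "u \<in> V" and "y \<in> V" and "(y, v) \<in> E"
    and "prefix (minp u) (minp v)" and "y \<notin> set (minp u)"
  shows "path_less ord (minp u) (minp y)"
proof (rule ccontr)
  assume not_less: "\<not> path_less ord (minp u) (minp y)"
  have pu: "proper_path_from_to E v0 u (minp u)" and py: "proper_path_from_to E v0 y (minp y)"
    using min_path_proper assms(1,2) by blast+
  then have "y \<in> set (minp y)"
    unfolding proper_path_from_to_def is_path_def by (metis last_in_set)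
  then have "minp u \<noteq> minp y" and not_prefix: "\<not> prefix (minp y) (minp u)"
    using assms(5) set_mono_prefix by auto
  then have "path_less ord (minp u) (minp y) \<or> path_less ord (minp y) (minp u)"
    using path_less_total[OF edge_order] pu py unfolding proper_path_from_to_def by simp
  then have "path_less ord (minp y) (minp u)" using not_less by blast
  then have "branch_less ord (minp y) (minp u)"
    using not_prefix prefix_order.less_imp_le
    unfolding path_less_iff_strict_prefix_or_branch_less by blast
  moreover obtain r where "minp v = minp u @ r" using assms(4) prefix_def by blast
  ultimately have "path_less ord (minp y @ [v]) (minp v)"
    using branch_less_append[of ord "minp y" "minp u" "[v]" r]
    by (simp add: path_less_iff_strict_prefix_or_branch_less)
  moreover have "path_le ord (minp v) (minp y @ [v])"
    using min_path_le_snoc[OF py assms(3)] .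
  ultimately show False
    using path_less_asym[OF edge_order] path_less_irrefl by fastforce
qed

end

theorem lemma10p2:
  fixes V :: "'v set" and E :: "('v \<times> 'v) set" and ord :: "'v \<Rightarrow> 'v \<Rightarrow> 'v \<Rightarrow> bool" and v0 :: 'v
  assumes "finite_graph V E"
    and "edge_order E ord"
    and "connected_pointed V E v0"
    and "u \<in> V" and "v \<in> V" and "w \<in> V"
    and "prec_D E ord v0 u v" and "prec_D E ord v0 v w"
    and "(u, w) \<in> E"
  shows "\<exists>v'\<in>V. preceq_D E ord v0 u v' \<and> prec_D E ord v0 v' v \<and> (v', v) \<in> E"
proof -
  interpret pointed_edge_ordered_graph V E ord v0
    using assms(1-3) by unfold_locales
  have uv: "path_less ord (minp u) (minp v)" and vw: "path_less ord (minp v) (minp w)"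
    using assms(7,8) unfolding prec_D_def by simp_all
  have pu: "proper_path_from_to E v0 u (minp u)" and pv: "proper_path_from_to E v0 v (minp v)"
    using min_path_proper assms(4,5) by blast+
  have "path_less ord (minp v) (minp u @ [w])"
    using path_less_le_trans[OF edge_order vw min_path_le_snoc[OF pu assms(9)]] .
  then have "strict_prefix (minp u) (minp v)"
    using path_less_append_imp_strict_prefix[OF edge_order uv] by blast
  then obtain t where t: "minp v = minp u @ t" "t \<noteq> []"
    by (auto simp: strict_prefix_def prefix_def)
  moreover have "last t = v" using pv t unfolding proper_path_from_to_def by simp
  ultimately obtain r where r: "minp v = (minp u @ r) @ [v]"
    by (metis append_assoc append_butlast_last_id)
  define y where "y = last (minp u @ r)"
  have "minp u \<noteq> []" using pu unfolding proper_path_from_to_def is_path_def by simp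
  then have "(y, v) \<in> E" and "y \<in> V" and "path_less ord (minp y) (minp v)"
    using min_path_last_edge[OF assms(5) r] unfolding y_def by simp_all
  moreover have "y = u \<or> path_less ord (minp u) (minp y)"
  proof (cases "r = []")
    case True
    then show ?thesis using pu unfolding y_def proper_path_from_to_def by simp
  next
    case False
    then have "y \<notin> set (minp u)"
      using pv r unfolding y_def proper_path_from_to_def by auto
    then show ?thesis
      using min_path_less_if_avoiding[OF assms(4) \<open>y \<in> V\<close> \<open>(y, v) \<in> E\<close>] r
      by (simp add: prefix_def)
  qed
  ultimately show ?thesis
    unfolding preceq_D_def prec_D_def by (intro bexI[where x = y]) auto
qed

end
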